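(* Consider an execution of the Adaptive Algorithm. If position $p_j$ interviews applicant $a_i$ and $i<j$, then $a_i$ has been interviewed by every position $p_{j'}$ with $i\le j'<j$.
   Context: Model. Let $A=\{a_1,\dots,a_n\}$ be a set of applicants and $P=\{p_1,\dots,p_n\}$ a set of positions. Each applicant $a_i$ has a publicly known value $u_i\in\mathbb R$ and each position $p_j$ a publicly known value $v_j\in\mathbb R$, indexed so that $u_1\ge u_2\ge\dots\ge u_n$ and $v_1\ge v_2\ge\dots\ge v_n$. The random variables $\epsilon^A_{ij}$, $\epsilon^P_{ji}$ ($i,j\in[n]$) are mutually independent and identically distributed according to a known distribution symmetric about $0$ (mean zero). The utility of $a_i$ for $p_j$ is $v_j+\epsilon^A_{ij}$ and the utility of $p_j$ for $a_i$ is $u_i+\epsilon^P_{ji}$; the values $\epsilon^A_{ij},\epsilon^P_{ji}$ become known only when $a_i$ and $p_j$ interview each other. The observed utility $v^o_{ij}$ of $a_i$ for $p_j$ equals $v_j+\epsilon^A_{ij}$ if $a_i,p_j$ have interviewed and $v_j$ otherwise; $u^o_{ji}$ is defined symmetrically ($u_i+\epsilon^P_{ji}$ or $u_i$). Write $p_j\succ_{a_i}p_{j'}$ iff $v^o_{ij}>v^o_{ij'}$ and $a_i\succ_{p_j}a_{i'}$ iff $u^o_{ji}>u^o_{ji'}$ (ties broken in favor of the smaller index); every agent prefers any partner to being unmatched. For a matching $\mu$, $\mu(x)$ denotes the partner of $x$ ($\emptyset$ if unmatched). Adaptive Algorithm. Initially all agents are unmatched and $v^o_{ij}=v_j$, $u^o_{ji}=u_i$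 for all $i,j$. For an unmatched applicant $a$, let $\beta(a)$ be $a$'s most preferred position (w.r.t. current observed utilities) that has not yet rejected $a$. While some applicant is unmatched: let $j^*$ be the smallest index such that $\beta(a_i)=p_{j^*}$ for some unmatched $a_i$; let $a_{i^*}$ be $p_{j^*}$'s favorite applicant among $\{a_i:\beta(a_i)=p_{j^*},\mu(a_i)=\emptyset\}$. If $a_{i^*},p_{j^*}$ have not interviewed and ($i^*\le j^*$ or $a_{i^*}\succ_{p_{j^*}}\mu(p_{j^*})$), then they interview and $v^o_{i^*j^*},u^o_{j^*i^*}$ are updated. Otherwise: if $\mu(p_{j^*})\succ_{p_{j^*}}a_{i^*}$, then $p_{j^*}$ rejects $a_{i^*}$; else $p_{j^*}$ rejects $\mu(p_{j^*})$ (if nonempty) and $a_{i^*},p_{j^*}$ become matched. When all applicants are matched, output $\mu$. *)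

theory Defs
  imports Complex_Main
begin

(* Agents are indexed 1..n: applicant a_i is index i, position p_j is index j.
   Parameters: u (applicant values), v (position values),
   eA i j = epsilon^A_{ij}, eP j i = epsilon^P_{ji} (one realization). *)

record state =
  Itv :: "(nat \<times> nat) set"      (* (i,j): a_i and p_j have interviewed *)
  Rej :: "(nat \<times> nat) set"      (* (i,j): p_j has rejected a_i *)
  Mt  :: "nat \<Rightarrow> nat option"    (* Mt s j = Some i: p_j is matched to a_i *)

datatype action = Interview nat nat | Reject nat nat | Match nat nat

definition vo :: "(nat \<Rightarrow> nat \<Rightarrow> real) \<Rightarrow> (nat \<Rightarrow> real) \<Rightarrow> (nat \<times> nat) set \<Rightarrow> nat \<Rightarrow> nat \<Rightarrow> real" where
  "vo eA v I i j = (if (i, j) \<in> I then v j + eA i j else v j)"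

definition uo :: "(nat \<Rightarrow> nat \<Rightarrow> real) \<Rightarrow> (nat \<Rightarrow> real) \<Rightarrow> (nat \<times> nat) set \<Rightarrow> nat \<Rightarrow> nat \<Rightarrow> real" where
  "uo eP u I j i = (if (i, j) \<in> I then u i + eP j i else u i)"

definition prefA :: "(nat \<Rightarrow> nat \<Rightarrow> real) \<Rightarrow> (nat \<Rightarrow> real) \<Rightarrow> (nat \<times> nat) set \<Rightarrow> nat \<Rightarrow> nat \<Rightarrow> nat \<Rightarrow> bool" where
  "prefA eA v I i j j' =
     (vo eA v I i j > vo eA v I i j' \<or> (vo eA v I i j = vo eA v I i j' \<and> j < j'))"

definition prefP :: "(nat \<Rightarrow> nat \<Rightarrow> real) \<Rightarrow> (nat \<Rightarrow> real) \<Rightarrow> (nat \<times> nat) set \<Rightarrow> nat \<Rightarrow> nat \<Rightarrow> nat \<Rightarrow> bool" where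
  "prefP eP u I j i i' =
     (uo eP u I j i > uo eP u I j i' \<or> (uo eP u I j i = uo eP u I j i' \<and> i < i'))"

definition unmatched :: "nat \<Rightarrow> (nat \<Rightarrow> nat option) \<Rightarrow> nat \<Rightarrow> bool" where
  "unmatched n M i = (\<forall>j\<in>{1..n}. M j \<noteq> Some i)"

definition is_beta :: "nat \<Rightarrow> (nat \<Rightarrow> nat \<Rightarrow> real) \<Rightarrow> (nat \<Rightarrow> real) \<Rightarrow> state \<Rightarrow> nat \<Rightarrow> nat \<Rightarrow> bool" where
  "is_beta n eA v s i j =
     (j \<in> {1..n} \<and> (i, j) \<notin> Rej s \<and>
      (\<forall>j'\<in>{1..n}. (i, j') \<notin> Rej s \<and> j' \<noteq> j \<longrightarrow> prefA eA v (Itv s) i j j'))"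

definition is_jstar :: "nat \<Rightarrow> (nat \<Rightarrow> nat \<Rightarrow> real) \<Rightarrow> (nat \<Rightarrow> real) \<Rightarrow> state \<Rightarrow> nat \<Rightarrow> bool" where
  "is_jstar n eA v s j =
     ((\<exists>i\<in>{1..n}. unmatched n (Mt s) i \<and> is_beta n eA v s i j) \<and>
      (\<forall>j'<j. \<not> (\<exists>i\<in>{1..n}. unmatched n (Mt s) i \<and> is_beta n eA v s i j')))"

definition is_istar :: "nat \<Rightarrow> (nat \<Rightarrow> real) \<Rightarrow> (nat \<Rightarrow> real) \<Rightarrow> (nat \<Rightarrow> nat \<Rightarrow> real) \<Rightarrow> (nat \<Rightarrow> nat \<Rightarrow> real) \<Rightarrow> state \<Rightarrow> nat \<Rightarrow> nat \<Rightarrow> bool" where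
  "is_istar n u v eA eP s j i =
     (i \<in> {1..n} \<and> unmatched n (Mt s) i \<and> is_beta n eA v s i j \<and>
      (\<forall>i'\<in>{1..n}. unmatched n (Mt s) i' \<and> is_beta n eA v s i' j \<and> i' \<noteq> i
          \<longrightarrow> prefP eP u (Itv s) j i i'))"

definition chosen_action :: "nat \<Rightarrow> (nat \<Rightarrow> real) \<Rightarrow> (nat \<Rightarrow> real) \<Rightarrow> (nat \<Rightarrow> nat \<Rightarrow> real) \<Rightarrow> (nat \<Rightarrow> nat \<Rightarrow> real) \<Rightarrow> state \<Rightarrow> action \<Rightarrow> bool" where
  "chosen_action n u v eA eP s act =
     (\<exists>i j. is_jstar n eA v s j \<and> is_istar n u v eA eP s j i \<and>
       (let interview_cond =
              ((i, j) \<notin> Itv s \<and>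
               (i \<le> j \<or> (case Mt s j of None \<Rightarrow> True | Some i' \<Rightarrow> prefP eP u (Itv s) j i i')));
            current_better =
              (case Mt s j of None \<Rightarrow> False | Some i' \<Rightarrow> prefP eP u (Itv s) j i' i)
        in (interview_cond \<and> act = Interview i j) \<or>
           (\<not> interview_cond \<and> current_better \<and> act = Reject i j) \<or>
           (\<not> interview_cond \<and> \<not> current_better \<and> act = Match i j)))"

fun apply_action :: "state \<Rightarrow> action \<Rightarrow> state" where
  "apply_action s (Interview i j) = s\<lparr>Itv := insert (i, j) (Itv s)\<rparr>"
| "apply_action s (Reject i j) = s\<lparr>Rej := insert (i, j) (Rej s)\<rparr>"
| "apply_action s (Match i j) =
     s\<lparr>Rej := (case Mt s j of None \<Rightarrow> Rej s | Some i' \<Rightarrow> insert (i', j) (Rej s)),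
       Mt := (Mt s)(j := Some i)\<rparr>"

definition init_state :: state where
  "init_state = \<lparr>Itv = {}, Rej = {}, Mt = (\<lambda>_. None)\<rparr>"

definition adaptive_step :: "nat \<Rightarrow> (nat \<Rightarrow> real) \<Rightarrow> (nat \<Rightarrow> real) \<Rightarrow> (nat \<Rightarrow> nat \<Rightarrow> real) \<Rightarrow> (nat \<Rightarrow> nat \<Rightarrow> real) \<Rightarrow> state \<Rightarrow> state \<Rightarrow> bool" where
  "adaptive_step n u v eA eP s s' =
     ((\<exists>i\<in>{1..n}. unmatched n (Mt s) i) \<and>
      (\<exists>act. chosen_action n u v eA eP s act \<and> s' = apply_action s act))"

end

theory Submission
  imports Defs
begin

text \<open>Positions p_j with j \<ge> i never reject or hold a_i without an interview,
  since for i \<le> j the interview condition of the algorithm is satisfied whenever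
  the pair has not interviewed yet. Hence an un-interviewed p_j' with i \<le> j' has
  not rejected a_i either. If p_j interviews a_i with i < j, then p_j = \<beta>(a_i) is
  un-interviewed, so every un-interviewed p_j' with i \<le> j' < j has observed value
  v_j' \<ge> v_j and the smaller index, hence would be preferred by a_i to p_j.\<close>

definition undecided_before_interview :: "state \<Rightarrow> bool" where
  "undecided_before_interview s \<longleftrightarrow>
     (\<forall>i j. (i, j) \<in> Rej s \<and> i \<le> j \<longrightarrow> (i, j) \<in> Itv s) \<and>
     (\<forall>i j. Mt s j = Some i \<and> i \<le> j \<longrightarrow> (i, j) \<in> Itv s)"

lemma undecided_before_interview_init: "undecided_before_interview init_state"
  by (simp add: undecided_before_interview_def init_state_def)

lemma undecided_before_interview_step:
  assumes "adaptive_step n u v eA eP s s'" and "undecided_before_interview s"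
  shows "undecided_before_interview s'"
proof -
  obtain act i j where s': "s' = apply_action s act"
    and choice: "let interview_cond =
              ((i, j) \<notin> Itv s \<and>
               (i \<le> j \<or> (case Mt s j of None \<Rightarrow> True | Some i' \<Rightarrow> prefP eP u (Itv s) j i i')));
            current_better =
              (case Mt s j of None \<Rightarrow> False | Some i' \<Rightarrow> prefP eP u (Itv s) j i' i)
        in (interview_cond \<and> act = Interview i j) \<or>
           (\<not> interview_cond \<and> current_better \<and> act = Reject i j) \<or>
           (\<not> interview_cond \<and> \<not> current_better \<and> act = Match i j)"
    using assms(1) unfolding adaptive_step_def chosen_action_def by blast
  show ?thesis
    using choice assms(2) unfolding s' undecided_before_interview_def Let_def
    by (cases "Mt s j") (auto split: if_splits)
qed

lemma undecided_before_interview_reachable: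
  assumes "(adaptive_step n u v eA eP)\<^sup>*\<^sup>* init_state s"
  shows "undecided_before_interview s"
  using assms
  by (induction rule: rtranclp_induct)
    (auto intro: undecided_before_interview_init undecided_before_interview_step)

lemma chosen_action_InterviewD:
  assumes "chosen_action n u v eA eP s (Interview i j)"
  shows "is_beta n eA v s i j" and "i \<in> {1..n}" and "(i, j) \<notin> Itv s"
proof -
  obtain i0 j0 where "is_istar n u v eA eP s j0 i0"
    and "let interview_cond =
              ((i0, j0) \<notin> Itv s \<and>
               (i0 \<le> j0 \<or> (case Mt s j0 of None \<Rightarrow> True | Some i' \<Rightarrow> prefP eP u (Itv s) j0 i0 i')));
            current_better =
              (case Mt s j0 of None \<Rightarrow> False | Some i' \<Rightarrow> prefP eP u (Itv s) j0 i' i0)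
        in (interview_cond \<and> Interview i j = Interview i0 j0) \<or>
           (\<not> interview_cond \<and> current_better \<and> Interview i j = Reject i0 j0) \<or>
           (\<not> interview_cond \<and> \<not> current_better \<and> Interview i j = Match i0 j0)"
    using assms unfolding chosen_action_def by blast
  then show "is_beta n eA v s i j" "i \<in> {1..n}" "(i, j) \<notin> Itv s"
    unfolding is_istar_def Let_def by auto
qed

lemma is_beta_uninterviewed_better_rejected:
  assumes v_sorted: "\<And>k l. 1 \<le> k \<Longrightarrow> k \<le> l \<Longrightarrow> l \<le> n \<Longrightarrow> v l \<le> v k"
    and beta: "is_beta n eA v s i j"
    and "1 \<le> j'" "j' < j"
    and "(i, j) \<notin> Itv s" "(i, j') \<notin> Itv s"
  shows "(i, j') \<in> Rej s"
proof (rule ccontr)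
  assume "(i, j') \<notin> Rej s"
  with beta assms(3,4) have "prefA eA v (Itv s) i j j'"
    unfolding is_beta_def by auto
  moreover have "v j \<le> v j'"
    using v_sorted[of j' j] beta assms(3,4) unfolding is_beta_def by auto
  ultimately show False
    using assms(4-6) unfolding prefA_def vo_def by auto
qed

theorem mainTheorem3:
  fixes n :: nat and u v :: "nat \<Rightarrow> real" and eA eP :: "nat \<Rightarrow> nat \<Rightarrow> real"
    and s :: state and i j :: nat
  assumes u_sorted: "\<And>k l. 1 \<le> k \<Longrightarrow> k \<le> l \<Longrightarrow> l \<le> n \<Longrightarrow> u l \<le> u k"
    and v_sorted: "\<And>k l. 1 \<le> k \<Longrightarrow> k \<le> l \<Longrightarrow> l \<le> n \<Longrightarrow> v l \<le> v k"
    and reach: "(adaptive_step n u v eA eP)\<^sup>*\<^sup>* init_state s"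
    and unm: "\<exists>k\<in>{1..n}. unmatched n (Mt s) k"
    and intv: "chosen_action n u v eA eP s (Interview i j)"
    and lt: "i < j"
  shows "\<forall>j'. i \<le> j' \<and> j' < j \<longrightarrow> (i, j') \<in> Itv s"
proof (intro allI impI)
  fix j' assume j': "i \<le> j' \<and> j' < j"
  have beta: "is_beta n eA v s i j" and i: "i \<in> {1..n}" and new: "(i, j) \<notin> Itv s"
    using chosen_action_InterviewD[OF intv] by auto
  have undecided: "undecided_before_interview s"
    using reach by (rule undecided_before_interview_reachable)
  show "(i, j') \<in> Itv s"
  proof (rule ccontr)
    assume "(i, j') \<notin> Itv s"
    then have "(i, j') \<in> Rej s"
      using is_beta_uninterviewed_better_rejected[OF v_sorted beta _ _ new] i j' by auto
    with undecided j' \<open>(i, j') \<notin> Itv s\<close> show False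
      unfolding undecided_before_interview_def by auto
  qed
qed

end
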